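(* Let $s\ge 1$, $i$ and $j'$ be integers with $s\le i\le 2s$ and $i-s\le j'\le s$. Then $$\sum_{t=0}^{2s-i}\frac{(-1)^t}{2s-t}\binom{2s-i}{t}\binom{2s-t-1-j'}{s-j'}=\frac{(-1)^{s+i+j'}}{i}\binom{s}{j'}\binom{2s}{i}^{-1}.$$
   Context: For an integer $b\ge 0$ and any integer $a$, $\binom{a}{b}=a(a-1)\cdots(a-b+1)/b!$ (so $\binom{a}{0}=1$). *)

theory Defs
  imports "HOL-Analysis.Analysis"
begin

end

(*
  Writing (\<Delta>f) t = f t - f (t + 1), an alternating sum
  \<Sum>t\<le>n. (-1)^t (n choose t) f t is (\<Delta>^n f) 0.  For f t = (c - t gchoose m) / (N - t),
  split (c - t gchoose m) into (c - N gchoose m) plus (N - t) times a polynomial in t of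
  degree < m \<le> n, which \<Delta>^n annihilates.  What remains is (c - N gchoose m) times
  (\<Delta>^n (\<lambda>t. 1 / (N - t))) 0 = (-1)^n / (N (N - 1 gchoose n)).  With N = 2s, n = 2s - i,
  m = s - j' and c - N = -(j' + 1) this is the closed form of the theorem.
*)
theory Submission
  imports Defs
begin

lemma alternating_binomial_sum_Suc:
  fixes f :: "nat \<Rightarrow> 'a::comm_ring_1"
  shows "(\<Sum>t\<le>Suc n. (-1)^t * of_nat (Suc n choose t) * f t)
       = (\<Sum>t\<le>n. (-1)^t * of_nat (n choose t) * (f t - f (Suc t)))"
proof -
  have split: "(\<Sum>t\<le>Suc n. (-1)^t * of_nat (Suc n choose t) * f t)
      = (f 0 + (\<Sum>t\<le>n. (-1)^Suc t * of_nat (n choose Suc t) * f (Suc t)))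
            + (\<Sum>t\<le>n. (-1)^Suc t * of_nat (n choose t) * f (Suc t))"
    by (subst sum.atMost_Suc_shift)
      (simp add: sum.distrib[symmetric] algebra_simps del: sum.atMost_Suc)
  have shift: "f 0 + (\<Sum>t\<le>n. (-1)^Suc t * of_nat (n choose Suc t) * f (Suc t))
      = (\<Sum>t\<le>n. (-1)^t * of_nat (n choose t) * f t)"
    using sum.atMost_Suc_shift[of "\<lambda>t. (-1)^t * of_nat (n choose t) * f t" n]
    by (simp add: binomial_eq_0)
  show ?thesis
    unfolding split shift by (simp add: sum_subtractf sum_negf algebra_simps)
qed

lemma alternating_binomial_sum_gbinomial:
  fixes x :: "'a::field_char_0"
  shows "(\<Sum>t\<le>n. (-1)^t * of_nat (n choose t) * ((x - of_nat t) gchoose k))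
       = (if n \<le> k then (x - of_nat n) gchoose (k - n) else 0)"
proof (induction n arbitrary: x k)
  case 0
  then show ?case by simp
next
  case (Suc n)
  show ?case
  proof (cases k)
    case 0
    then show ?thesis
      using alternating_binomial_sum_Suc[where f = "\<lambda>_. 1" and n = n] by simp
  next
    case (Suc k')
    have "((x - of_nat t) gchoose k) - ((x - of_nat (Suc t)) gchoose k)
        = (x - 1 - of_nat t) gchoose k'" for t
      using gbinomial_Suc_Suc[of "x - 1 - of_nat t" k'] by (simp add: Suc algebra_simps)
    then have "(\<Sum>t\<le>Suc n. (-1)^t * of_nat (Suc n choose t) * ((x - of_nat t) gchoose k))
        = (\<Sum>t\<le>n. (-1)^t * of_nat (n choose t) * ((x - 1 - of_nat t) gchoose k'))"
      by (simp only: alternating_binomial_sum_Suc)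
    also have "\<dots> = (if n \<le> k' then (x - 1 - of_nat n) gchoose (k' - n) else 0)"
      by (rule Suc.IH)
    finally show ?thesis
      by (simp add: Suc algebra_simps)
  qed
qed

lemma gbinomial_nonzero:
  fixes a :: "'a::field_char_0"
  assumes "\<And>i. i < k \<Longrightarrow> a \<noteq> of_nat i"
  shows "a gchoose k \<noteq> 0"
proof -
  have "fact k * (a gchoose k) \<noteq> 0"
    unfolding gbinomial_mult_fact using assms by simp
  then show ?thesis by simp
qed

lemma alternating_binomial_sum_inverse:
  fixes N :: "'a::field_char_0"
  assumes "\<And>t. t \<le> n \<Longrightarrow> N \<noteq> of_nat t"
  shows "(\<Sum>t\<le>n. (-1)^t * of_nat (n choose t) / (N - of_nat t))
       = (-1)^n / (N * ((N - 1) gchoose n))"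
  using assms
proof (induction n arbitrary: N)
  case 0
  then show ?case by simp
next
  case (Suc n)
  define G where "G = (N - 1) gchoose n"
  define D where "D = N - 1 - of_nat n"
  have N: "N \<noteq> 0" and D: "D \<noteq> 0"
    using Suc.prems[of 0] Suc.prems[of "Suc n"] by (auto simp: D_def algebra_simps)
  have G: "G \<noteq> 0"
    unfolding G_def
  proof (rule gbinomial_nonzero)
    show "N - 1 \<noteq> of_nat i" if "i < n" for i
      using Suc.prems[of "Suc i"] that by (auto simp: algebra_simps)
  qed
  have absorb: "(N - 1) * ((N - 1 - 1) gchoose n) = D * G"
    unfolding G_def D_def by (rule gbinomial_absorb_comp[symmetric])
  have G_Suc: "(N - 1) gchoose Suc n = D * G / of_nat (Suc n)"
    using gbinomial_absorption[of n "N - 1"] absorb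
    by (simp add: eq_divide_eq del: of_nat_Suc) (simp add: ac_simps)
  have "(\<Sum>t\<le>Suc n. (-1)^t * of_nat (Suc n choose t) / (N - of_nat t))
      = (\<Sum>t\<le>n. (-1)^t * of_nat (n choose t) / (N - of_nat t))
        - (\<Sum>t\<le>n. (-1)^t * of_nat (n choose t) / (N - 1 - of_nat t))"
    using alternating_binomial_sum_Suc[of n "\<lambda>t. 1 / (N - of_nat t)"]
    by (simp add: sum_subtractf[symmetric] algebra_simps)
  also have "(\<Sum>t\<le>n. (-1)^t * of_nat (n choose t) / (N - 1 - of_nat t))
      = (-1)^n / ((N - 1) * ((N - 1 - 1) gchoose n))"
  proof (rule Suc.IH)
    show "N - 1 \<noteq> of_nat t" if "t \<le> n" for t
      using Suc.prems[of "Suc t"] that by (auto simp: algebra_simps)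
  qed
  also have "(\<Sum>t\<le>n. (-1)^t * of_nat (n choose t) / (N - of_nat t)) = (-1)^n / (N * G)"
    unfolding G_def using Suc.prems by (intro Suc.IH) simp
  also have "(-1)^n / (N * G) - (-1)^n / ((N - 1) * ((N - 1 - 1) gchoose n))
      = (-1)^n * (D - N) / (N * D * G)"
    unfolding absorb using N D G by (simp add: field_simps)
  also have "\<dots> = (-1)^Suc n / (N * ((N - 1) gchoose Suc n))"
    unfolding G_Suc using N D G by (simp add: D_def field_simps)
  finally show ?case .
qed

lemma alternating_binomial_sum_gbinomial_divide:
  fixes N c :: "'a::field_char_0"
  assumes "m \<le> n" and "\<And>t. t \<le> n \<Longrightarrow> N \<noteq> of_nat t"
  shows "(\<Sum>t\<le>n. (-1)^t * of_nat (n choose t) * ((c - of_nat t) gchoose m) / (N - of_nat t))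
       = (-1)^n / (N * ((N - 1) gchoose n)) * ((c - N) gchoose m)"
  using assms(1)
proof (induction m arbitrary: c)
  case 0
  then show ?case using alternating_binomial_sum_inverse[OF assms(2)] by simp
next
  case (Suc m)
  have gbinomial_Suc: "x gchoose Suc m = x / of_nat (Suc m) * ((x - 1) gchoose m)" for x :: 'a
    using gbinomial_absorption'[of "Suc m" x] by (simp del: of_nat_Suc)
  define a where "a t = (-1)^t * of_nat (n choose t) * ((c - 1 - of_nat t) gchoose m)" for t
  have "(\<Sum>t\<le>n. (-1)^t * of_nat (n choose t) * ((c - of_nat t) gchoose Suc m) / (N - of_nat t))
      = (\<Sum>t\<le>n. a t / of_nat (Suc m)
          + (c - N) / of_nat (Suc m) * (a t / (N - of_nat t)))"
  proof (rule sum.cong)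
    fix t assume "t \<in> {..n}"
    then have "N - of_nat t \<noteq> 0" using assms(2) by simp
    moreover have summand: "(-1)^t * of_nat (n choose t) * ((c - of_nat t) gchoose Suc m)
        = (c - of_nat t) / of_nat (Suc m) * a t"
      unfolding a_def gbinomial_Suc
      by (simp add: algebra_simps del: of_nat_Suc)
    ultimately show "(-1)^t * of_nat (n choose t) * ((c - of_nat t) gchoose Suc m) / (N - of_nat t)
        = a t / of_nat (Suc m) + (c - N) / of_nat (Suc m) * (a t / (N - of_nat t))"
      unfolding summand by (simp add: field_simps del: of_nat_Suc)
  qed simp
  also have "\<dots> = (\<Sum>t\<le>n. a t) / of_nat (Suc m)
        + (c - N) / of_nat (Suc m) * (\<Sum>t\<le>n. a t / (N - of_nat t))"
    by (simp add: sum.distrib sum_distrib_left sum_divide_distrib)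
  also have "(\<Sum>t\<le>n. a t) = 0"
    using alternating_binomial_sum_gbinomial[of n "c - 1" m] Suc.prems unfolding a_def by simp
  also have "(\<Sum>t\<le>n. a t / (N - of_nat t))
      = (-1)^n / (N * ((N - 1) gchoose n)) * ((c - 1 - N) gchoose m)"
    using Suc.IH[of "c - 1"] Suc.prems unfolding a_def by simp
  also have "0 / of_nat (Suc m)
        + (c - N) / of_nat (Suc m) * ((-1)^n / (N * ((N - 1) gchoose n)) * ((c - 1 - N) gchoose m))
      = (-1)^n / (N * ((N - 1) gchoose n)) * ((c - N) gchoose Suc m)"
    unfolding gbinomial_Suc by (simp add: mult_ac diff_diff_eq add.commute del: of_nat_Suc)
  finally show ?case .
qed

lemma gbinomial_minus_Suc_complement:
  assumes "j \<le> s"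
  shows "(- of_nat (Suc j) gchoose (s - j) :: 'a::field_char_0)
       = (-1)^(s - j) * of_nat (s choose j)"
proof -
  have "(- of_nat (Suc j) gchoose (s - j) :: 'a) = (-1)^(s - j) * (of_nat s gchoose (s - j))"
    using gbinomial_minus[of "of_nat (Suc j) :: 'a" "s - j"] assms by simp
  then show ?thesis
    using assms by (simp add: binomial_gbinomial[symmetric] binomial_symmetric[symmetric])
qed

lemma binomial_absorb_comp_complement:
  assumes "i \<le> n"
  shows "n * (n - 1 choose (n - i)) = i * (n choose i)"
  using binomial_absorb_comp[of n "n - i"] assms by (simp add: binomial_symmetric[symmetric])

lemma lemma7_nat:
  fixes s i j :: nat
  assumes "1 \<le> s" "s \<le> i" "i \<le> 2 * s" "i \<le> s + j" "j \<le> s"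
  shows "(\<Sum>t\<le>2 * s - i. (-1)^t / (real (2 * s) - real t) * (real (2 * s - i) gchoose t)
            * ((real (2 * s) - real t - 1 - real j) gchoose (s - j)))
       = (-1)^(s + i + j) / real i * real (s choose j) / real (2 * s choose i)"
proof -
  have "(\<Sum>t\<le>2 * s - i. (-1)^t / (real (2 * s) - real t) * (real (2 * s - i) gchoose t)
            * ((real (2 * s) - real t - 1 - real j) gchoose (s - j)))
      = (\<Sum>t\<le>2 * s - i. (-1)^t * real ((2 * s - i) choose t)
            * ((real (2 * s - 1 - j) - real t) gchoose (s - j)) / (real (2 * s) - real t))"
    using assms by (intro sum.cong) (simp_all add: binomial_gbinomial algebra_simps)
  also have "\<dots> = (-1)^(2 * s - i) / (real (2 * s) * ((real (2 * s) - 1) gchoose (2 * s - i)))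
        * ((real (2 * s - 1 - j) - real (2 * s)) gchoose (s - j))"
    using assms by (intro alternating_binomial_sum_gbinomial_divide) auto
  also have "real (2 * s - 1 - j) - real (2 * s) = - of_nat (Suc j)"
    using assms by simp
  also have "(- of_nat (Suc j) gchoose (s - j)) = (-1)^(s - j) * real (s choose j)"
    using assms(5) by (rule gbinomial_minus_Suc_complement)
  also have "real (2 * s) * ((real (2 * s) - 1) gchoose (2 * s - i))
      = real i * real (2 * s choose i)"
  proof -
    have pred: "real (2 * s) - 1 = real (2 * s - 1)"
      using assms by simp
    show ?thesis
      unfolding pred binomial_gbinomial[symmetric] of_nat_mult[symmetric]
      using binomial_absorb_comp_complement[of i "2 * s"] assms by simp
  qed
  also have "(-1)^(2 * s - i) / (real i * real (2 * s choose i))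
        * ((-1)^(s - j) * real (s choose j))
      = (-1)^(s + i + j) / real i * real (s choose j) / real (2 * s choose i)"
  proof -
    have parity: "s + i + j = (2 * s - i) + (s - j) + 2 * (i + j - s)"
      using assms by simp
    show ?thesis
      unfolding parity power_add power_mult by simp
  qed
  finally show ?thesis .
qed

theorem lemma7:
  fixes s i j' :: int
  assumes "s \<ge> 1" and "s \<le> i" and "i \<le> 2 * s" and "i - s \<le> j'" and "j' \<le> s"
  shows "(\<Sum>t = 0..2 * s - i.
            (-1) ^ nat t / real_of_int (2 * s - t)
            * (real_of_int (2 * s - i) gchoose nat t)
            * (real_of_int (2 * s - t - 1 - j') gchoose nat (s - j')))
         = (-1) ^ nat (s + i + j') / real_of_int i
            * (real_of_int s gchoose nat j')
            / (real_of_int (2 * s) gchoose nat i)"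
proof -
  obtain S I J :: nat where nat_params: "s = int S" "i = int I" "j' = int J"
    using assms by (metis nonneg_int_cases order_trans zero_le_one diff_ge_0_iff_ge)
  have bounds: "1 \<le> S" "S \<le> I" "I \<le> 2 * S" "I \<le> S + J" "J \<le> S"
    using assms unfolding nat_params by auto
  have range: "{0..2 * s - i} = {int 0..int (2 * S - I)}"
    using bounds unfolding nat_params by simp
  have exponents: "nat (s - j') = S - J" "nat (s + i + j') = S + I + J"
    using bounds unfolding nat_params by auto
  show ?thesis
    unfolding range sum.atLeast_int_atMost_int_shift exponents
    using lemma7_nat[OF bounds] bounds unfolding nat_params
    by (simp add: atLeast0AtMost binomial_gbinomial)
qed

end
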